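(* Let $T^{(0)},T^{(1)}$ be closed tetrahedra with vertices $P^{(0)}_1,\dots,P^{(0)}_4$ and $P^{(1)}_1,\dots,P^{(1)}_4$ respectively. Then $$d_{\mathcal H}(T^{(0)},T^{(1)})\le\min_{\wp}\max_{1\le i\le4}|P^{(0)}_i-P^{(1)}_{\wp(i)}|,$$ where the minimum runs over permutations $\wp$ of $\{1,2,3,4\}$. Moreover, if both $T^{(0)},T^{(1)}$ are contained in $B_R(0)$ and have inradius greater than $r_1>0$, there is a constant $A_1>0$ depending only on $R$ and $r_1$ such that $$\min_{\wp}\max_{1\le i\le4}|P^{(0)}_i-P^{(1)}_{\wp(i)}|\le A_1\,d_{\mathcal H}(T^{(0)},T^{(1)}).$$
   Context: $d_{\mathcal H}$ denotes the Hausdorff distance between compact subsets of $\mathbb{R}^3$; $B_R(0)$ is the open ball of radius $R$ centered at the origin. *)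

theory Defs
  imports "HOL-Analysis.Analysis" "HOL-Combinatorics.Permutations"
begin

definition hausdorff_dist :: "'a::metric_space set \<Rightarrow> 'a set \<Rightarrow> real" where
  "hausdorff_dist A B = max (SUP a\<in>A. infdist a B) (SUP b\<in>B. infdist b A)"

definition tetra_vertices :: "(nat \<Rightarrow> real^3) \<Rightarrow> bool" where
  "tetra_vertices P \<longleftrightarrow> inj_on P {1..4} \<and> \<not> affine_dependent (P ` {1..4})"

definition tetra :: "(nat \<Rightarrow> real^3) \<Rightarrow> (real^3) set" where
  "tetra P = convex hull (P ` {1..4})"

definition inradius :: "(real^3) set \<Rightarrow> real" where
  "inradius S = Sup {r. 0 < r \<and> (\<exists>x. ball x r \<subseteq> S)}"

definition vertex_dist :: "(nat \<Rightarrow> real^3) \<Rightarrow> (nat \<Rightarrow> real^3) \<Rightarrow> real" where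
  "vertex_dist P Q = Min ((\<lambda>p. Max ((\<lambda>i. norm (P i - Q (p i))) ` {1..4}))
                          ` {p. p permutes {1..4}})"

end

theory Submission
  imports Defs
begin

text \<open>Matching the vertices along a permutation, the convex hull of the pairs of matched vertices
  couples the two tetrahedra, so every point of one lies within the largest vertex displacement of
  the other: this is the first inequality. Conversely, let \<open>\<lambda>\<^sub>i\<close> be the barycentric
  coordinate of the vertex \<open>P\<^sub>i\<close>; an inscribed ball of radius \<open>r\<close> forces
  \<open>|\<nabla>\<lambda>\<^sub>i| \<le> 1/r\<close>. A vertex of the other tetrahedron maximizing \<open>\<lambda>\<^sub>i\<close> is within
  Hausdorff distance \<open>d\<close> of a point where \<open>\<lambda>\<^sub>i \<ge> 1 - 2d/r\<close>, and such points are within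
  \<open>4Rd/r\<close> of \<open>P\<^sub>i\<close>. Since the vertices are \<open>r\<close>-separated, for small \<open>d\<close> this nearest-vertex
  assignment is a permutation; for large \<open>d\<close> the diameter bound \<open>2R\<close> suffices.\<close>

lemma convex_on_inner_affine:
  fixes a :: "'a::real_inner"
  assumes "convex S"
  shows "convex_on S (\<lambda>z. a \<bullet> z + b)"
  unfolding convex_on_def
proof (intro conjI assms ballI allI impI)
  fix x y and u v :: real
  assume "u + v = 1"
  then have "b = u * b + v * b" by (metis distrib_right mult_1)
  then show "a \<bullet> (u *\<^sub>R x + v *\<^sub>R y) + b \<le> u * (a \<bullet> x + b) + v * (a \<bullet> y + b)"
    by (simp add: inner_simps algebra_simps)
qed

lemma inner_affine_bounds_convex_hull:
  fixes a :: "'a::real_inner"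
  assumes "\<And>x. x \<in> S \<Longrightarrow> l \<le> a \<bullet> x + b \<and> a \<bullet> x + b \<le> u"
    and "z \<in> convex hull S"
  shows "l \<le> a \<bullet> z + b \<and> a \<bullet> z + b \<le> u"
proof -
  have "\<forall>x\<in>convex hull S. a \<bullet> x + b \<le> u"
    by (rule convex_on_convex_hull_bound[OF convex_on_inner_affine[OF convex_convex_hull]])
      (use assms(1) in blast)
  moreover have "\<forall>x\<in>convex hull S. (- a) \<bullet> x + (- b) \<le> - l"
    by (rule convex_on_convex_hull_bound[OF convex_on_inner_affine[OF convex_convex_hull]])
      (use assms(1) in force)
  ultimately show ?thesis using assms(2) by (force simp: inner_simps)
qed

lemma exists_vertex_inner_ge:
  fixes a :: "'a::real_inner"
  assumes "finite T" "T \<noteq> {}" "y \<in> convex hull T"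
  shows "\<exists>w\<in>T. a \<bullet> y \<le> a \<bullet> w"
proof -
  define m where "m = Max ((\<lambda>w. a \<bullet> w) ` T)"
  have "m \<in> (\<lambda>w. a \<bullet> w) ` T" unfolding m_def using assms by simp
  moreover have "\<forall>x\<in>convex hull T. a \<bullet> x + 0 \<le> m"
    by (rule convex_on_convex_hull_bound[OF convex_on_inner_affine[OF convex_convex_hull]])
      (simp add: m_def assms)
  ultimately show ?thesis using assms(3) by auto
qed

lemma hausdorff_dist_commute: "hausdorff_dist A B = hausdorff_dist B A"
  unfolding hausdorff_dist_def by (rule max.commute)

lemma infdist_le_hausdorff_dist:
  fixes A B :: "'a::metric_space set"
  assumes "compact A" "x \<in> A"
  shows "infdist x B \<le> hausdorff_dist A B"
proof -
  have "bdd_above ((\<lambda>a. infdist a B) ` A)"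
    by (intro bounded_imp_bdd_above compact_imp_bounded compact_continuous_image
        continuous_on_infdist continuous_on_id assms)
  then show ?thesis
    using cSUP_upper assms(2) unfolding hausdorff_dist_def by (meson max.coboundedI1)
qed

lemma hausdorff_dist_obtains_near_point:
  fixes A B :: "'a::heine_borel set"
  assumes "compact A" "compact B" "B \<noteq> {}" "x \<in> A"
  obtains y where "y \<in> B" "dist x y \<le> hausdorff_dist A B"
proof -
  obtain y where y: "y \<in> B" "infdist x B = dist x y"
    using infdist_attains_inf[OF compact_imp_closed] assms by blast
  moreover have "dist x y \<le> hausdorff_dist A B"
    using infdist_le_hausdorff_dist[OF assms(1,4), of B] y by simp
  ultimately show thesis using that by blast
qed

lemma hausdorff_dist_le:
  assumes "A \<noteq> {}" "B \<noteq> {}"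
    and "\<And>x. x \<in> A \<Longrightarrow> infdist x B \<le> d" "\<And>y. y \<in> B \<Longrightarrow> infdist y A \<le> d"
  shows "hausdorff_dist A B \<le> d"
  unfolding hausdorff_dist_def using assms by (simp add: cSUP_least)

lemma hausdorff_dist_convex_hull_le:
  fixes p q :: "'i \<Rightarrow> 'a::real_normed_vector"
  assumes "finite I" "I \<noteq> {}"
  shows "hausdorff_dist (convex hull (p ` I)) (convex hull (q ` I))
           \<le> Max ((\<lambda>i. norm (p i - q i)) ` I)"
proof -
  define M where "M = Max ((\<lambda>i. norm (p i - q i)) ` I)"
  define G where "G = (\<lambda>i. (p i, q i)) ` I"
  have lin: "linear (\<lambda>w::'a \<times> 'a. fst w - snd w)"
    by (intro linear_compose_sub linear_fst linear_snd)
  have "(\<lambda>w. fst w - snd w) ` G \<subseteq> cball 0 M"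
    using assms by (auto simp: G_def M_def intro: Max_ge)
  then have hull_disp: "convex hull ((\<lambda>w. fst w - snd w) ` G) \<subseteq> cball 0 M"
    by (simp add: hull_minimal)
  then have disp: "norm (fst w - snd w) \<le> M" if "w \<in> convex hull G" for w
  proof -
    have "fst w - snd w \<in> convex hull ((\<lambda>w. fst w - snd w) ` G)"
      using that convex_hull_linear_image[OF lin, of G] by blast
    then show ?thesis using hull_disp by auto
  qed
  have hullP: "fst ` (convex hull G) = convex hull (p ` I)"
    using convex_hull_linear_image[OF linear_fst, of G] by (simp add: G_def image_image)
  have hullQ: "snd ` (convex hull G) = convex hull (q ` I)"
    using convex_hull_linear_image[OF linear_snd, of G] by (simp add: G_def image_image)
  show ?thesis
    unfolding M_def[symmetric]
  proof (rule hausdorff_dist_le)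
    fix x assume "x \<in> convex hull (p ` I)"
    then obtain w where w: "w \<in> convex hull G" "x = fst w" using hullP by blast
    then have "snd w \<in> convex hull (q ` I)" using hullQ by blast
    then show "infdist x (convex hull (q ` I)) \<le> M"
      by (rule infdist_le2) (use w disp in \<open>simp add: dist_norm\<close>)
  next
    fix y assume "y \<in> convex hull (q ` I)"
    then obtain w where w: "w \<in> convex hull G" "y = snd w" using hullQ by blast
    then have "fst w \<in> convex hull (p ` I)" using hullP by blast
    then show "infdist y (convex hull (p ` I)) \<le> M"
      by (rule infdist_le2) (use w disp in \<open>simp add: dist_norm norm_minus_commute\<close>)
  qed (use assms in auto)
qed

lemma affine_coordinate_exists:
  fixes S :: "'a::euclidean_space set"
  assumes "\<not> affine_dependent S" "v \<in> S"
  obtains a b where "a \<bullet> v + b = 1" "\<And>w. w \<in> S \<Longrightarrow> w \<noteq> v \<Longrightarrow> a \<bullet> w + b = 0"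
proof -
  have "\<not> dependent ((\<lambda>x. - v + x) ` (S - {v}))"
    using assms affine_dependent_iff_dependent2 by blast
  then obtain g :: "'a \<Rightarrow> real"
    where g: "linear g" "\<forall>x\<in>(\<lambda>x. - v + x) ` (S - {v}). g x = -1"
    using linear_independent_extend[of _ "\<lambda>_. -1"] by blast
  define a where "a = adjoint g 1"
  have ga: "g x = a \<bullet> x" for x
    using adjoint_works[OF g(1), of x 1] by (simp add: a_def inner_commute)
  show thesis
  proof (rule that[of a "1 - a \<bullet> v"])
    fix w assume "w \<in> S" "w \<noteq> v"
    then have "g (- v + w) = -1" using g(2) by blast
    then show "a \<bullet> w + (1 - a \<bullet> v) = 0" by (simp add: ga inner_simps)
  qed simp
qed

lemma norm_le_of_inner_affine_bounded_on_ball: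
  fixes a :: "'a::real_inner"
  assumes "r > 0" "\<And>z. z \<in> ball c r \<Longrightarrow> 0 \<le> a \<bullet> z + b \<and> a \<bullet> z + b \<le> 1"
  shows "norm a \<le> 1 / r"
proof (cases "a = 0")
  case False
  define s where "s = (r / 2 / norm a) *\<^sub>R a"
  have "norm s = r / 2" using False assms(1) by (simp add: s_def)
  then have "c + s \<in> ball c r" "c - s \<in> ball c r" using assms(1) by (auto simp: dist_norm)
  then have "a \<bullet> (c + s) + b \<le> 1" "0 \<le> a \<bullet> (c - s) + b" using assms(2) by blast+
  then have "2 * (a \<bullet> s) \<le> 1" by (simp add: inner_simps)
  moreover have "a \<bullet> s = r / 2 * norm a"
    using False by (simp add: s_def power2_norm_eq_inner[symmetric] power2_eq_square)
  ultimately have "r * norm a \<le> 1" by simp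
  then show ?thesis using assms(1) by (simp add: field_simps mult.commute)
qed (use assms in simp)

text \<open>The hypotheses on \<open>a\<close> and \<open>b\<close> below say that \<open>a \<bullet> z + b\<close> is the barycentric coordinate
  of \<open>z\<close> with respect to the vertex \<open>v\<close> of the simplex \<open>convex hull S\<close>.\<close>

lemma barycentric_coordinate_bounds:
  fixes a :: "'a::real_inner"
  assumes "a \<bullet> v + b = 1" "\<And>w. w \<in> S \<Longrightarrow> w \<noteq> v \<Longrightarrow> a \<bullet> w + b = 0"
    and "z \<in> convex hull S"
  shows "0 \<le> a \<bullet> z + b \<and> a \<bullet> z + b \<le> 1"
  by (rule inner_affine_bounds_convex_hull[OF _ assms(3)]) (metis assms(1,2) order_refl zero_le_one)

lemma barycentric_coordinate_norm_le:
  fixes a :: "'a::real_inner"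
  assumes "a \<bullet> v + b = 1" "\<And>w. w \<in> S \<Longrightarrow> w \<noteq> v \<Longrightarrow> a \<bullet> w + b = 0"
    and "r > 0" "ball c r \<subseteq> convex hull S"
  shows "norm a \<le> 1 / r"
  using assms barycentric_coordinate_bounds[OF assms(1,2)]
  by (intro norm_le_of_inner_affine_bounded_on_ball) blast+

text \<open>The bound holds at the vertices, and the difference of the two sides is convex.\<close>
lemma dist_vertex_le_barycentric_coordinate:
  fixes a :: "'a::real_inner"
  assumes "a \<bullet> v + b = 1" "\<And>w. w \<in> S \<Longrightarrow> w \<noteq> v \<Longrightarrow> a \<bullet> w + b = 0"
    and "v \<in> S" "\<And>w. w \<in> S \<Longrightarrow> dist v w \<le> D" and "z \<in> convex hull S"
  shows "dist v z \<le> D * (1 - (a \<bullet> z + b))"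
proof -
  have "D \<ge> 0" using assms(3,4) by force
  then have "convex_on (convex hull S) (\<lambda>x. dist v x + ((D *\<^sub>R a) \<bullet> x + (D * b - D)))"
    by (intro convex_on_add convex_on_dist convex_on_inner_affine convex_convex_hull)
  moreover have "\<forall>w\<in>S. dist v w + ((D *\<^sub>R a) \<bullet> w + (D * b - D)) \<le> 0"
  proof
    fix w assume w: "w \<in> S"
    show "dist v w + ((D *\<^sub>R a) \<bullet> w + (D * b - D)) \<le> 0"
    proof (cases "w = v")
      case True
      have "D * (a \<bullet> v + b) = D" using assms(1) by simp
      then show ?thesis using True by (simp add: algebra_simps)
    next
      case False
      then have "D * (a \<bullet> w + b) = 0" using assms(2) w by simp
      then show ?thesis using assms(4)[OF w] by (simp add: algebra_simps)
    qed
  qed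
  ultimately have "dist v z + ((D *\<^sub>R a) \<bullet> z + (D * b - D)) \<le> 0"
    using convex_on_convex_hull_bound assms(5) by blast
  then show ?thesis by (simp add: algebra_simps)
qed

lemma simplex_vertices_separated:
  fixes S :: "'a::euclidean_space set"
  assumes "\<not> affine_dependent S" "v \<in> S" "w \<in> S" "w \<noteq> v"
    and "r > 0" "ball c r \<subseteq> convex hull S"
  shows "r \<le> dist v w"
proof -
  obtain a b where ab: "a \<bullet> v + b = 1" "\<And>w. w \<in> S \<Longrightarrow> w \<noteq> v \<Longrightarrow> a \<bullet> w + b = 0"
    using affine_coordinate_exists[OF assms(1,2)] by blast
  have "a \<bullet> w + b = 0" using ab(2) assms(3,4) .
  then have "1 = a \<bullet> (v - w)" using ab(1) by (simp add: inner_simps)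
  also have "\<dots> \<le> norm a * dist v w" by (simp add: dist_norm norm_cauchy_schwarz)
  also have "\<dots> \<le> 1 / r * dist v w"
    using barycentric_coordinate_norm_le[OF ab assms(5,6)] by (intro mult_right_mono) auto
  finally show ?thesis using assms(5) by (simp add: field_simps)
qed

lemma simplex_vertex_near_vertex:
  fixes S T :: "'a::euclidean_space set"
  defines "d \<equiv> hausdorff_dist (convex hull S) (convex hull T)"
  assumes "\<not> affine_dependent S" "finite T" "T \<noteq> {}" "v \<in> S"
    and "r > 0" "ball c r \<subseteq> convex hull S" "\<And>u. u \<in> S \<Longrightarrow> dist v u \<le> D"
  shows "\<exists>w\<in>T. dist v w \<le> d * (1 + 2 * D / r)"
proof -
  obtain a b where ab: "a \<bullet> v + b = 1" "\<And>w. w \<in> S \<Longrightarrow> w \<noteq> v \<Longrightarrow> a \<bullet> w + b = 0"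
    using affine_coordinate_exists[OF assms(2,5)] by blast
  define f where "f z = a \<bullet> z + b" for z
  have lip: "f x - f y \<le> dist x y / r" for x y
  proof -
    have "f x - f y \<le> norm a * dist x y"
      using norm_cauchy_schwarz[of a "x - y"] by (simp add: f_def dist_norm inner_simps)
    also have "\<dots> \<le> 1 / r * dist x y"
      using barycentric_coordinate_norm_le[OF ab assms(6,7)] by (intro mult_right_mono) auto
    finally show ?thesis by simp
  qed
  have cS: "compact (convex hull S)" "convex hull S \<noteq> {}"
    using aff_independent_finite[OF assms(2)] assms(5)
    by (auto simp: compact_convex_hull finite_imp_compact)
  have cT: "compact (convex hull T)" "convex hull T \<noteq> {}"
    using assms(3,4) by (auto simp: compact_convex_hull finite_imp_compact)
  obtain y where y: "y \<in> convex hull T" "dist v y \<le> d"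
    using hausdorff_dist_obtains_near_point[OF cS(1) cT] assms(5) hull_inc
    unfolding d_def by metis
  obtain w where w: "w \<in> T" "a \<bullet> y \<le> a \<bullet> w"
    using exists_vertex_inner_ge[OF assms(3,4) y(1)] by blast
  obtain z where z: "z \<in> convex hull S" "dist w z \<le> d"
    using hausdorff_dist_obtains_near_point[OF cT(1) cS] w(1) hull_inc hausdorff_dist_commute
    unfolding d_def by metis
  have "dist v y / r \<le> d / r" "dist w z / r \<le> d / r"
    using y(2) z(2) assms(6) by (simp_all add: divide_right_mono)
  then have fz: "1 - f z \<le> 2 * d / r"
    using lip[of v y] lip[of w z] w(2) ab(1) by (simp add: f_def)
  have D: "D \<ge> 0" using assms(5,8) by force
  have "dist v w \<le> dist v z + dist w z" by (rule dist_triangle2)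
  also have "dist v z \<le> D * (1 - f z)"
    unfolding f_def by (rule dist_vertex_le_barycentric_coordinate[OF ab assms(5,8) z(1)])
  also have "\<dots> \<le> D * (2 * d / r)" using fz D by (rule mult_left_mono)
  finally have "dist v w \<le> D * (2 * d / r) + d" using z(2) by simp
  then show ?thesis using w(1) by (auto simp: algebra_simps)
qed

lemma tetra_vertex_in_ball:
  assumes "tetra P \<subseteq> ball 0 R" "i \<in> {1..4}"
  shows "norm (P i) < R"
proof -
  have "P i \<in> tetra P" unfolding tetra_def using assms(2) by (intro hull_inc) blast
  then show ?thesis using assms(1) by auto
qed

lemma radius_pos_of_tetra_subset_ball:
  assumes "tetra P \<subseteq> ball 0 R"
  shows "R > 0"
proof -
  have "norm (P 1) < R" using assms by (rule tetra_vertex_in_ball) simp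
  then show ?thesis using norm_ge_zero[of "P 1"] by linarith
qed

lemma interior_tetra_nonempty:
  assumes "tetra_vertices P"
  shows "interior (tetra P) \<noteq> {}"
proof -
  have "card (P ` {1..4}) = Suc DIM(real^3)"
    using assms card_image[of P "{1..4}"] by (simp add: tetra_vertices_def)
  then show ?thesis
    using assms interior_convex_hull_eq_empty unfolding tetra_vertices_def tetra_def by blast
qed

lemma inradius_gtE:
  assumes "interior S \<noteq> {}" "r1 < inradius S"
  obtains r c where "r1 < r" "ball c r \<subseteq> S"
proof -
  obtain x e where "e > 0" "ball x e \<subseteq> S"
    using assms(1) by (auto simp: mem_interior)
  then have "{r. 0 < r \<and> (\<exists>x. ball x r \<subseteq> S)} \<noteq> {}" by blast
  from less_cSupD[OF this] assms(2) show thesis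
    using that unfolding inradius_def by blast
qed

lemma hausdorff_dist_tetra_le_vertex_dist:
  "hausdorff_dist (tetra P) (tetra Q) \<le> vertex_dist P Q"
proof -
  let ?F = "(\<lambda>p. Max ((\<lambda>i. norm (P i - Q (p i))) ` {1..4})) ` {p. p permutes {1..4::nat}}"
  have "vertex_dist P Q \<in> ?F"
    unfolding vertex_dist_def using finite_permutations permutes_id by (intro Min_in) blast+
  then obtain p where p: "p permutes {1..4}"
    and vd: "vertex_dist P Q = Max ((\<lambda>i. norm (P i - Q (p i))) ` {1..4})" by blast
  have "tetra Q = convex hull ((Q \<circ> p) ` {1..4})"
    unfolding tetra_def image_comp[symmetric] permutes_image[OF p] ..
  then show ?thesis
    unfolding vd tetra_def using hausdorff_dist_convex_hull_le[of "{1..4::nat}" P "Q \<circ> p"] by simp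
qed

lemma vertex_dist_le_assignment:
  assumes "inj_on f {1..4}" "f ` {1..4} \<subseteq> {1..4}" "\<And>i. i \<in> {1..4} \<Longrightarrow> norm (P i - Q (f i)) \<le> M"
  shows "vertex_dist P Q \<le> M"
proof -
  define p where "p i = (if i \<in> {1..4::nat} then f i else i)" for i
  have "inj_on p {1..4}" "p ` {1..4} \<subseteq> {1..4}"
    using assms(1,2) by (auto simp: p_def inj_on_def)
  then have "bij_betw p {1..4} {1..4}" by (simp add: bij_betw_def endo_inj_surj)
  then have "p permutes {1..4}" by (rule bij_imp_permutes) (simp add: p_def del: atLeastAtMost_iff)
  then have "vertex_dist P Q \<le> Max ((\<lambda>i. norm (P i - Q (p i))) ` {1..4})"
    unfolding vertex_dist_def using finite_permutations by (intro Min_le) blast+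
  also have "\<dots> \<le> M" using assms(3) by (simp add: p_def)
  finally show ?thesis .
qed

lemma vertex_dist_tetra_le_diameter:
  assumes "tetra P \<subseteq> ball 0 R" "tetra Q \<subseteq> ball 0 R"
  shows "vertex_dist P Q \<le> 2 * R"
proof (rule vertex_dist_le_assignment[of id])
  fix i :: nat assume "i \<in> {1..4}"
  then show "norm (P i - Q (id i)) \<le> 2 * R"
    using tetra_vertex_in_ball[OF assms(1)] tetra_vertex_in_ball[OF assms(2)]
      norm_triangle_ineq4[of "P i" "Q i"] by fastforce
qed auto


lemma tetra_vertex_near_vertex:
  assumes "tetra_vertices P" "tetra P \<subseteq> ball 0 R" "r > 0" "ball c r \<subseteq> tetra P" "i \<in> {1..4}"
  shows "\<exists>j\<in>{1..4}. norm (P i - Q j)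
           \<le> hausdorff_dist (tetra P) (tetra Q) * (1 + 4 * R / r)"
proof -
  have "dist (P i) (P k) \<le> 2 * R" if "k \<in> {1..4}" for k
    using tetra_vertex_in_ball[OF assms(2) assms(5)] tetra_vertex_in_ball[OF assms(2) that]
      norm_triangle_ineq4[of "P i" "P k"] by (simp add: dist_norm)
  then have "\<And>u. u \<in> P ` {1..4} \<Longrightarrow> dist (P i) u \<le> 2 * R" by blast
  then obtain w where "w \<in> Q ` {1..4}"
    and "dist (P i) w \<le> hausdorff_dist (tetra P) (tetra Q) * (1 + 2 * (2 * R) / r)"
    using simplex_vertex_near_vertex[of "P ` {1..4}" "Q ` {1..4}" "P i" r c "2 * R"] assms
    unfolding tetra_vertices_def tetra_def by auto
  then show ?thesis by (auto simp: dist_norm)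
qed

lemma vertex_dist_le_hausdorff_dist_tetra:
  assumes "tetra_vertices P" "tetra P \<subseteq> ball 0 R" "tetra Q \<subseteq> ball 0 R"
    and "0 < r1" "r1 < r" "ball c r \<subseteq> tetra P"
  shows "vertex_dist P Q \<le> (1 + 4 * R / r1)\<^sup>2 * hausdorff_dist (tetra P) (tetra Q)"
proof -
  define d where "d = hausdorff_dist (tetra P) (tetra Q)"
  define C where "C = 1 + 4 * R / r1"
  have "R > 0" using assms(2) by (rule radius_pos_of_tetra_subset_ball)
  then have C: "C \<ge> 1" "4 * R / r1 \<le> C" using assms(4) by (simp_all add: C_def)
  have "P 1 \<in> tetra P" unfolding tetra_def by (intro hull_inc) auto
  then have d: "d \<ge> 0"
    unfolding d_def tetra_def
    by (meson infdist_nonneg infdist_le_hausdorff_dist order_trans compact_convex_hull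
        finite_imp_compact finite_imageI finite_atLeastAtMost)
  have "4 * R / r \<le> 4 * R / r1" using \<open>R > 0\<close> assms(4,5) by (simp add: frac_le)
  then have "d * (1 + 4 * R / r) \<le> d * C" unfolding C_def using d by (simp add: mult_left_mono)
  then have "\<forall>i\<in>{1..4}. \<exists>j\<in>{1..4}. norm (P i - Q j) \<le> d * C"
    using tetra_vertex_near_vertex[OF assms(1,2) _ assms(6)] assms(4,5) unfolding d_def
    by (meson less_trans order_trans)
  then obtain f where f: "\<And>i. i \<in> {1..4} \<Longrightarrow> f i \<in> {1..4} \<and> norm (P i - Q (f i)) \<le> d * C"
    by metis
  show ?thesis
  proof (cases "2 * (d * C) < r1")
    case True
    have "inj_on f {1..4}"
    proof (rule inj_onI, rule ccontr)
      fix i k assume ik: "i \<in> {1..4}" "k \<in> {1..4}" "f i = f k" "i \<noteq> k"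
      have "P i \<noteq> P k" using assms(1) ik by (auto simp: tetra_vertices_def inj_on_def)
      then have "r \<le> dist (P i) (P k)"
        using simplex_vertices_separated[of "P ` {1..4}" "P i" "P k" r c] assms ik
        unfolding tetra_vertices_def tetra_def by auto
      also have "\<dots> \<le> norm (P i - Q (f i)) + norm (P k - Q (f k))"
        using ik(3) norm_triangle_ineq4[of "P i - Q (f i)" "P k - Q (f k)"] by (simp add: dist_norm)
      also have "\<dots> \<le> 2 * (d * C)" using f[OF ik(1)] f[OF ik(2)] by linarith
      finally show False using True assms(5) by linarith
    qed
    then have "vertex_dist P Q \<le> d * C"
      using f by (intro vertex_dist_le_assignment) auto
    also have "\<dots> = d * C * 1" by simp
    also have "\<dots> \<le> d * C * C" using C d by (intro mult_left_mono) auto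
    finally show ?thesis unfolding C_def d_def by (simp add: power2_eq_square mult_ac)
  next
    case False
    have "vertex_dist P Q \<le> 2 * R" using assms(2,3) by (rule vertex_dist_tetra_le_diameter)
    also have "\<dots> = r1 * (2 * R / r1)" using assms(4) by simp
    also have "\<dots> \<le> 2 * (d * C) * (2 * R / r1)"
      using False \<open>R > 0\<close> assms(4) by (intro mult_right_mono) auto
    also have "\<dots> = d * C * (4 * R / r1)" by simp
    also have "\<dots> \<le> d * C * C" using C d by (intro mult_left_mono) auto
    finally show ?thesis unfolding C_def d_def by (simp add: power2_eq_square mult_ac)
  qed
qed

theorem mainTheorem5:
  shows "(\<forall>P0 P1. tetra_vertices P0 \<and> tetra_vertices P1 \<longrightarrow>
            hausdorff_dist (tetra P0) (tetra P1) \<le> vertex_dist P0 P1)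
       \<and> (\<forall>R r1::real. 0 < r1 \<longrightarrow> (\<exists>A1>0. \<forall>P0 P1.
            tetra_vertices P0 \<and> tetra_vertices P1 \<and>
            tetra P0 \<subseteq> ball 0 R \<and> tetra P1 \<subseteq> ball 0 R \<and>
            inradius (tetra P0) > r1 \<and> inradius (tetra P1) > r1 \<longrightarrow>
            vertex_dist P0 P1 \<le> A1 * hausdorff_dist (tetra P0) (tetra P1)))"
proof (intro conjI allI impI)
  fix P0 P1
  show "hausdorff_dist (tetra P0) (tetra P1) \<le> vertex_dist P0 P1"
    by (rule hausdorff_dist_tetra_le_vertex_dist)
next
  fix R r1 :: real
  assume r1: "0 < r1"
  show "\<exists>A1>0. \<forall>P0 P1.
            tetra_vertices P0 \<and> tetra_vertices P1 \<and>
            tetra P0 \<subseteq> ball 0 R \<and> tetra P1 \<subseteq> ball 0 R \<and>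
            inradius (tetra P0) > r1 \<and> inradius (tetra P1) > r1 \<longrightarrow>
            vertex_dist P0 P1 \<le> A1 * hausdorff_dist (tetra P0) (tetra P1)"
  proof (intro exI[of _ "(1 + 4 * \<bar>R\<bar> / r1)\<^sup>2"] conjI allI impI)
    show "0 < (1 + 4 * \<bar>R\<bar> / r1)\<^sup>2" using r1 by (intro zero_less_power add_pos_nonneg) auto
    fix P0 P1 assume H: "tetra_vertices P0 \<and> tetra_vertices P1 \<and>
            tetra P0 \<subseteq> ball 0 R \<and> tetra P1 \<subseteq> ball 0 R \<and>
            inradius (tetra P0) > r1 \<and> inradius (tetra P1) > r1"
    then obtain r c where "r1 < r" "ball c r \<subseteq> tetra P0"
      using inradius_gtE interior_tetra_nonempty by metis
    moreover have "\<bar>R\<bar> = R" using H radius_pos_of_tetra_subset_ball[of P0 R] by simp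
    ultimately show "vertex_dist P0 P1 \<le> (1 + 4 * \<bar>R\<bar> / r1)\<^sup>2 * hausdorff_dist (tetra P0) (tetra P1)"
      using vertex_dist_le_hausdorff_dist_tetra[of P0 R P1 r1 r c] H r1 by simp
  qed
qed

end
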